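(* Let $N\geq 2$ be an integer, let $I_0>0$, and let $0<\mu_{min}\leq\mu_{max}$ and $\varepsilon_{max}\geq 0$ be given constants. For $K>0$, $\mu_1\in\mathbb{R}$ and $\varepsilon\geq 0$ define $$G_N(K,\mu_1,\varepsilon)=\frac{I_0}{K}\Big[(1+K\mu_1)^N+\big(1-K\mu_1(1+\varepsilon)\big)^N-2\Big].$$ Call a pair $(\mu_1,\varepsilon)$ admissible if $\mu_{min}\leq|\mu_1|\leq\mu_{max}$ and $0\leq\varepsilon\leq\varepsilon_{max}$. Fix $K>0$. (i) If $N$ is odd, then $G_N(K,\mu_1,\varepsilon)>0$ for all admissible pairs $(\mu_1,\varepsilon)$ if and only if $$G_N(K,\mu_{min},\varepsilon_{max})>0\quad\text{and}\quad G_N(K,\mu_{max},\varepsilon_{max})>0.$$ (ii) If $N$ is even, then $G_N(K,\mu_1,\varepsilon)>0$ for all admissible pairs $(\mu_1,\varepsilon)$ if and only if either $$K>\frac{2^{1/N}-1}{\mu_{min}},$$ or both $$K\leq\frac{1}{\mu_{min}(1+\varepsilon_{max})}\quad\text{and}\quad G_N(K,\mu_{min},\varepsilon_{max})>0.$$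
   Context: Financial interpretation (not needed for the mathematical statement): two stocks have independent per-period returns with constant means $\mu_1$ and $\mu_2=\beta\mu_1$, where $\beta=(1+\varepsilon)\beta_0$ with $\beta_0\neq 0$ known and $\varepsilon\in[0,\varepsilon_{max}]$ unknown ("directionally correlated returns"), and $\mu_{min}\leq|\mu_1|\leq\mu_{max}$ ("bounded non-zero momentum"). A two-stock controller invests $I_1(k)=I_0+Kg_1(k)$ in the first stock and $I_2(k)=-I_0/\beta_0-(K/\beta_0)g_2(k)$ in the second stock, where $g_i$ are the cumulative gain-loss functions with $g_i(0)=0$, under idealized frictionless market conditions. Then the expected total gain after $N$ periods is $\mathbb{E}[g(N)]=G_N(K,\mu_1,\varepsilon)$, and the theorem characterizes the feedback parameters $K>0$ for which this expectation is positive for all admissible parameters. Here $2^{1/N}$ denotes the positive real $N$-th root of $2$. *)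

theory Defs
  imports Complex_Main
begin

definition G_N :: "nat \<Rightarrow> real \<Rightarrow> real \<Rightarrow> real \<Rightarrow> real \<Rightarrow> real" where
  "G_N N I0 K mu1 eps = I0 / K * ((1 + K * mu1) ^ N + (1 - K * mu1 * (1 + eps)) ^ N - 2)"

definition admissible :: "real \<Rightarrow> real \<Rightarrow> real \<Rightarrow> real \<Rightarrow> real \<Rightarrow> bool" where
  "admissible mu_min mu_max eps_max mu1 eps \<longleftrightarrow>
     mu_min \<le> \<bar>mu1\<bar> \<and> \<bar>mu1\<bar> \<le> mu_max \<and> 0 \<le> eps \<and> eps \<le> eps_max"

end

(* With x = K mu1 and a = 1 + eps, G_N has the sign of
   gain_poly N x a = (1 + x)^N + (1 - x a)^N - 2 on the box [K mu_min, K mu_max] x [1, 1 + eps_max];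
   for mu1 < 0 it is always positive because (1 + t)^N + (1 - t)^N > 2. Growing a only lowers
   the gain (for even N as long as x a <= 1), so a = 1 + eps_max is the worst case.
   For odd N, x |-> gain_poly N x a cannot dip below zero between two positive values, since its
   derivative has the sign of a concave function: the endpoints decide.
   For even N, x |-> gain_poly N x a is convex and vanishes at 0, so positivity propagates upwards
   from x = K mu_min; once x a >= 1 the second power is harmless and the gain is positive iff
   (1 + x)^N > 2, a condition that is also forced by the kink a = 1/x. *)

theory Submission
  imports Defs "HOL-Analysis.Analysis"
begin

definition gain_poly :: "nat \<Rightarrow> real \<Rightarrow> real \<Rightarrow> real" where
  "gain_poly N x a = (1 + x) ^ N + (1 - x * a) ^ N - 2"

lemma G_N_eq_gain_poly: "G_N N I0 K mu1 eps = I0 / K * gain_poly N (K * mu1) (1 + eps)"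
  by (simp add: G_N_def gain_poly_def mult.assoc)

lemma G_N_pos_iff:
  assumes "I0 > 0" "K > 0"
  shows "G_N N I0 K mu1 eps > 0 \<longleftrightarrow> gain_poly N (K * mu1) (1 + eps) > 0"
proof -
  have "I0 / K > 0" using assms by simp
  then show ?thesis unfolding G_N_eq_gain_poly by (metis zero_less_mult_pos mult_pos_pos)
qed

lemma one_plus_minus_power_sum_gt_two:
  fixes t :: real
  assumes "t > 0" "n \<ge> 2"
  shows "(1 + t) ^ n + (1 - t) ^ n > 2"
  using assms(2)
proof (induction n rule: nat_induct_at_least)
  case base
  show ?case using assms(1) by (simp add: power2_eq_square algebra_simps)
next
  case (Suc n)
  have "(1 - t) ^ n \<le> \<bar>1 - t\<bar> ^ n" by (metis abs_ge_self power_abs)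
  also have "\<dots> \<le> (1 + t) ^ n" using assms(1) by (intro power_mono) auto
  finally have "0 \<le> t * ((1 + t) ^ n - (1 - t) ^ n)" using assms(1) by simp
  moreover have "(1 + t) ^ Suc n + (1 - t) ^ Suc n
      = (1 + t) ^ n + (1 - t) ^ n + t * ((1 + t) ^ n - (1 - t) ^ n)"
    by (simp add: algebra_simps)
  ultimately show ?case using Suc.IH by linarith
qed

lemma gain_poly_neg_pos:
  assumes "t > 0" "a \<ge> 1" "N \<ge> 2"
  shows "gain_poly N (- t) a > 0"
proof -
  have "(1 + t) ^ N \<le> (1 + t * a) ^ N"
    using assms by (intro power_mono) (auto simp: mult_le_cancel_left1)
  then show ?thesis
    using one_plus_minus_power_sum_gt_two[OF assms(1,3)] by (simp add: gain_poly_def)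
qed

lemma gain_poly_antimono_coeff:
  assumes "x \<ge> 0" "a \<le> b" "odd N \<or> x * b \<le> 1"
  shows "gain_poly N x b \<le> gain_poly N x a"
proof -
  have "x * a \<le> x * b" using assms(2,1) by (rule mult_left_mono)
  with assms(3) have "(1 - x * b) ^ N \<le> (1 - x * a) ^ N"
    by (auto intro: power_mono_odd power_mono)
  then show ?thesis by (simp add: gain_poly_def)
qed

lemma gain_poly_pos_if_power_gt_two:
  assumes "even N" "0 \<le> p" "p \<le> x" "(1 + p) ^ N > 2"
  shows "gain_poly N x a > 0"
proof -
  have "(1 + p) ^ N \<le> (1 + x) ^ N" using assms(2,3) by (intro power_mono) auto
  moreover have "(1 - x * a) ^ N \<ge> 0" using assms(1) by (simp add: zero_le_even_power)
  ultimately show ?thesis using assms(4) by (simp add: gain_poly_def)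
qed

text \<open>For even \<open>N\<close> the map \<open>x \<mapsto> gain_poly N x a\<close> is convex and vanishes at \<open>0\<close>.\<close>
lemma gain_poly_scaled_le:
  assumes "even N" "0 \<le> t" "t \<le> 1"
  shows "gain_poly N (t * x) a \<le> t * gain_poly N x a"
proof -
  have cv: "convex_on UNIV (\<lambda>z::real. z ^ N)" by (rule convex_power_even[OF assms(1)])
  have "(1 + t * x) ^ N \<le> (1 - t) * 1 ^ N + t * (1 + x) ^ N"
    using convex_onD[OF cv, of t 1 "1 + x"] assms(2,3) by (simp add: algebra_simps)
  moreover have "(1 - t * x * a) ^ N \<le> (1 - t) * 1 ^ N + t * (1 - x * a) ^ N"
    using convex_onD[OF cv, of t 1 "1 - x * a"] assms(2,3) by (simp add: algebra_simps)
  ultimately show ?thesis by (simp add: gain_poly_def algebra_simps)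
qed

lemma gain_poly_pos_upward_even:
  assumes "even N" "0 < p" "p \<le> x" "gain_poly N p a > 0"
  shows "gain_poly N x a > 0"
proof -
  have "gain_poly N p a \<le> p / x * gain_poly N x a"
    using gain_poly_scaled_le[OF assms(1), of "p / x" x a] assms(2,3) by simp
  with assms(4) have "0 < p / x * gain_poly N x a" by linarith
  moreover have "p / x > 0" using assms(2,3) by simp
  ultimately show ?thesis using zero_less_mult_pos by blast
qed

lemma gain_poly_has_real_derivative:
  "((\<lambda>z. gain_poly (Suc m) z a) has_real_derivative
      real (Suc m) * ((1 + z) ^ m - a * (1 - z * a) ^ m)) (at z)"
proof -
  have "((\<lambda>z. gain_poly (Suc m) z a) has_real_derivative
      of_nat (Suc m) * ((0 + 1) * (1 + z) ^ (Suc m - Suc 0))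
      + of_nat (Suc m) * ((0 - 1 * a) * (1 - z * a) ^ (Suc m - Suc 0)) - 0) (at z)"
    unfolding gain_poly_def
    by (intro derivative_intros DERIV_power DERIV_cmult_right DERIV_ident)
  then show ?thesis by (simp add: algebra_simps)
qed

lemma concave_on_one_plus_minus_abs:
  fixes a c :: real
  assumes "a > 0" "c \<ge> 0"
  shows "concave_on UNIV (\<lambda>z. 1 + z - c * \<bar>1 - z * a\<bar>)"
proof -
  have "concave_on UNIV (\<lambda>z::real. 1 + z - (c * a) * dist (1 / a) z)"
    using assms by (intro concave_on_diff concave_on_add convex_on_cmul convex_on_dist)
      (auto simp: concave_on_const concave_on_ident)
  moreover have "(c * a) * dist (1 / a) z = c * \<bar>1 - z * a\<bar>" for z
  proof -
    have "a * dist (1 / a) z = \<bar>(1 / a - z) * a\<bar>"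
      using assms(1) by (simp add: dist_real_def abs_mult)
    also have "(1 / a - z) * a = 1 - z * a" using assms(1) by (simp add: field_simps)
    finally show ?thesis by simp
  qed
  ultimately show ?thesis by simp
qed

lemma even_power_diff_sign:
  fixes a z :: real
  assumes "even m" "m > 0" "a \<ge> 0" "z \<ge> -1"
  shows "(1 + z) ^ m - a * (1 - z * a) ^ m > 0 \<longleftrightarrow> 1 + z - root m a * \<bar>1 - z * a\<bar> > 0"
    and "(1 + z) ^ m - a * (1 - z * a) ^ m < 0 \<longleftrightarrow> 1 + z - root m a * \<bar>1 - z * a\<bar> < 0"
proof -
  define v where "v = root m a * \<bar>1 - z * a\<bar>"
  have "a * (1 - z * a) ^ m = v ^ m"
    using assms(1-3) by (simp add: v_def power_mult_distrib power_even_abs)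
  moreover have "0 \<le> 1 + z" "0 \<le> v" using assms(3,4) by (auto simp: v_def real_root_ge_zero)
  ultimately have "(1 + z) ^ m \<le> a * (1 - z * a) ^ m \<longleftrightarrow> 1 + z \<le> v"
    and "a * (1 - z * a) ^ m \<le> (1 + z) ^ m \<longleftrightarrow> v \<le> 1 + z"
    using assms(2) by simp_all
  then show "(1 + z) ^ m - a * (1 - z * a) ^ m > 0 \<longleftrightarrow> 1 + z - root m a * \<bar>1 - z * a\<bar> > 0"
    and "(1 + z) ^ m - a * (1 - z * a) ^ m < 0 \<longleftrightarrow> 1 + z - root m a * \<bar>1 - z * a\<bar> < 0"
    unfolding v_def by linarith+
qed


text \<open>A nonpositive value between two positive ones would make the derivative change sign
  \<open>+, -, +\<close> on \<open>0 < z\<^sub>0 < z\<^sub>1 < z\<^sub>2\<close>. For odd \<open>N\<close> the derivative has the sign of the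
  concave function \<open>1 + z - a\<^bsup>1/(N-1)\<^esup> \<bar>1 - z a\<bar>\<close>, which cannot do that.\<close>
lemma gain_poly_pos_between_odd:
  assumes "odd N" "N \<ge> 2" "a \<ge> 1" "0 < p" "p \<le> x" "x \<le> q"
    and "gain_poly N p a > 0" "gain_poly N q a > 0"
  shows "gain_poly N x a > 0"
proof (rule ccontr)
  assume "\<not> ?thesis"
  then have x_nonpos: "gain_poly N x a \<le> 0" by simp
  have "p < x" using x_nonpos assms(5,7) by (cases "p = x") auto
  have "x < q" using x_nonpos assms(6,8) by (cases "x = q") auto
  obtain m where N: "N = Suc m" and "even m" "m > 0"
    using assms(1,2) by (cases N) auto
  define D where "D z = real N * ((1 + z) ^ m - a * (1 - z * a) ^ m)" for z
  define \<phi> where "\<phi> z = 1 + z - root m a * \<bar>1 - z * a\<bar>" for z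
  have deriv: "((\<lambda>z. gain_poly N z a) has_real_derivative D z) (at z)" for z
    unfolding D_def N by (rule gain_poly_has_real_derivative)
  have sign: "D z > 0 \<longleftrightarrow> \<phi> z > 0" "D z < 0 \<longleftrightarrow> \<phi> z < 0" if "z \<ge> -1" for z
    using even_power_diff_sign[OF \<open>even m\<close> \<open>m > 0\<close>, of a z] that assms(3)
    by (simp_all add: D_def \<phi>_def N zero_less_mult_iff mult_less_0_iff)
  have "gain_poly N 0 a = 0" by (simp add: gain_poly_def)
  obtain z0 where z0: "0 < z0" "z0 < p" "gain_poly N p a - gain_poly N 0 a = (p - 0) * D z0"
    using MVT2[OF assms(4), of "\<lambda>z. gain_poly N z a" D] deriv by blast
  obtain z1 where z1: "p < z1" "z1 < x" "gain_poly N x a - gain_poly N p a = (x - p) * D z1"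
    using MVT2[OF \<open>p < x\<close>, of "\<lambda>z. gain_poly N z a" D] deriv by blast
  obtain z2 where z2: "x < z2" "z2 < q" "gain_poly N q a - gain_poly N x a = (q - x) * D z2"
    using MVT2[OF \<open>x < q\<close>, of "\<lambda>z. gain_poly N z a" D] deriv by blast
  have "D z0 > 0" using z0 \<open>gain_poly N 0 a = 0\<close> assms(7) by (simp add: zero_less_mult_iff)
  moreover have "D z1 < 0"
  proof -
    have "(x - p) * D z1 < 0" using z1(3) x_nonpos assms(7) by linarith
    then show ?thesis using \<open>p < x\<close> by (simp add: mult_less_0_iff)
  qed
  moreover have "D z2 > 0"
  proof -
    have "(q - x) * D z2 > 0" using z2(3) x_nonpos assms(8) by linarith
    then show ?thesis using \<open>x < q\<close> by (simp add: zero_less_mult_iff)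
  qed
  ultimately have "\<phi> z0 > 0" "\<phi> z1 < 0" "\<phi> z2 > 0"
    using sign z0 z1 z2 assms(4) by auto
  moreover have "concave_on {z0..z2} \<phi>"
  proof -
    have "concave_on UNIV \<phi>"
      unfolding \<phi>_def using assms(3) by (intro concave_on_one_plus_minus_abs) (auto simp: real_root_ge_zero)
    then show ?thesis unfolding concave_on_def by (rule convex_on_subset) auto
  qed
  then have "\<phi> z1 \<ge> min (\<phi> z0) (\<phi> z2)"
    by (rule concave_on_ge_min) (use z0 z1 z2 in auto)
  ultimately show False by linarith
qed


lemma gain_poly_inverse_coeff:
  assumes "x \<noteq> 0" "N > 0"
  shows "gain_poly N x (1 / x) = (1 + x) ^ N - 2"
  using assms by (simp add: gain_poly_def)

lemma gain_poly_pos_on_box_odd: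
  assumes "odd N" "N \<ge> 2" "0 < p" "p \<le> q" "A \<ge> 1"
  shows "(\<forall>x a. p \<le> x \<and> x \<le> q \<and> 1 \<le> a \<and> a \<le> A \<longrightarrow> gain_poly N x a > 0)
    \<longleftrightarrow> gain_poly N p A > 0 \<and> gain_poly N q A > 0"
proof
  assume "\<forall>x a. p \<le> x \<and> x \<le> q \<and> 1 \<le> a \<and> a \<le> A \<longrightarrow> gain_poly N x a > 0"
  then show "gain_poly N p A > 0 \<and> gain_poly N q A > 0" using assms by auto
next
  assume ends: "gain_poly N p A > 0 \<and> gain_poly N q A > 0"
  show "\<forall>x a. p \<le> x \<and> x \<le> q \<and> 1 \<le> a \<and> a \<le> A \<longrightarrow> gain_poly N x a > 0"
  proof (intro allI impI)
    fix x a assume box: "p \<le> x \<and> x \<le> q \<and> 1 \<le> a \<and> a \<le> A"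
    then have "gain_poly N x A > 0"
      using gain_poly_pos_between_odd[OF assms(1,2,5,3)] ends by blast
    moreover have "gain_poly N x A \<le> gain_poly N x a"
      using box assms(1,3) by (intro gain_poly_antimono_coeff) auto
    ultimately show "gain_poly N x a > 0" by linarith
  qed
qed

lemma gain_poly_pos_on_box_even:
  assumes "even N" "N \<ge> 2" "0 < p" "p \<le> q" "A \<ge> 1"
  shows "(\<forall>x a. p \<le> x \<and> x \<le> q \<and> 1 \<le> a \<and> a \<le> A \<longrightarrow> gain_poly N x a > 0)
    \<longleftrightarrow> (1 + p) ^ N > 2 \<or> (p * A \<le> 1 \<and> gain_poly N p A > 0)"
proof
  assume all: "\<forall>x a. p \<le> x \<and> x \<le> q \<and> 1 \<le> a \<and> a \<le> A \<longrightarrow> gain_poly N x a > 0"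
  have "gain_poly N p A > 0" using all assms by auto
  moreover have "(1 + p) ^ N > 2" if "p * A > 1"
  proof (cases "p < 1")
    case True
    have "1 \<le> 1 / p" "1 / p \<le> A" using True that assms(3) by (auto simp: field_simps)
    then have "gain_poly N p (1 / p) > 0" using all assms(3,4) by auto
    then show ?thesis using assms(2,3) by (simp add: gain_poly_inverse_coeff)
  next
    case False
    have "(2::real) ^ 2 \<le> 2 ^ N" using assms(2) by (intro power_increasing) auto
    moreover have "(2::real) ^ N \<le> (1 + p) ^ N" using False by (intro power_mono) auto
    ultimately show ?thesis by simp
  qed
  ultimately show "(1 + p) ^ N > 2 \<or> (p * A \<le> 1 \<and> gain_poly N p A > 0)" by force
next
  assume "(1 + p) ^ N > 2 \<or> (p * A \<le> 1 \<and> gain_poly N p A > 0)"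
  then consider "(1 + p) ^ N > 2" | "p * A \<le> 1" "gain_poly N p A > 0" by blast
  then show "\<forall>x a. p \<le> x \<and> x \<le> q \<and> 1 \<le> a \<and> a \<le> A \<longrightarrow> gain_poly N x a > 0"
  proof cases
    case 1
    then show ?thesis using gain_poly_pos_if_power_gt_two[OF assms(1)] assms(3) by (meson less_imp_le)
  next
    case 2
    show ?thesis
    proof (intro allI impI)
      fix x a assume box: "p \<le> x \<and> x \<le> q \<and> 1 \<le> a \<and> a \<le> A"
      show "gain_poly N x a > 0"
      proof (cases "x * A \<le> 1")
        case True
        have "gain_poly N x A > 0"
          using gain_poly_pos_upward_even[OF assms(1,3)] box 2(2) by blast
        moreover have "gain_poly N x A \<le> gain_poly N x a"
          using box True assms(3) by (intro gain_poly_antimono_coeff) auto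
        ultimately show ?thesis by linarith
      next
        case False
        define y where "y = 1 / A"
        have "p \<le> y" "y < x" "y > 0"
          using 2(1) False assms(5) by (auto simp: y_def field_simps)
        then have "gain_poly N y (1 / y) > 0"
          using gain_poly_pos_upward_even[OF assms(1,3)] 2(2) by (simp add: y_def)
        then have "(1 + y) ^ N > 2"
          using \<open>y > 0\<close> assms(2) by (simp add: gain_poly_inverse_coeff)
        then show ?thesis
          using gain_poly_pos_if_power_gt_two[OF assms(1), of y x a] \<open>y > 0\<close> \<open>y < x\<close> by simp
      qed
    qed
  qed
qed


lemma all_admissible_G_N_pos_iff:
  assumes "N \<ge> 2" "I0 > 0" "K > 0" "0 < mu_min"
  shows "(\<forall>mu1 eps. admissible mu_min mu_max eps_max mu1 eps \<longrightarrow> G_N N I0 K mu1 eps > 0)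
    \<longleftrightarrow> (\<forall>x a. K * mu_min \<le> x \<and> x \<le> K * mu_max \<and> 1 \<le> a \<and> a \<le> 1 + eps_max
           \<longrightarrow> gain_poly N x a > 0)"
proof
  assume all: "\<forall>mu1 eps. admissible mu_min mu_max eps_max mu1 eps \<longrightarrow> G_N N I0 K mu1 eps > 0"
  show "\<forall>x a. K * mu_min \<le> x \<and> x \<le> K * mu_max \<and> 1 \<le> a \<and> a \<le> 1 + eps_max
           \<longrightarrow> gain_poly N x a > 0"
  proof (intro allI impI)
    fix x a assume box: "K * mu_min \<le> x \<and> x \<le> K * mu_max \<and> 1 \<le> a \<and> a \<le> 1 + eps_max"
    moreover have "x > 0" using box assms(3,4) by (meson mult_pos_pos order_less_le_trans)
    ultimately have "admissible mu_min mu_max eps_max (x / K) (a - 1)"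
      using assms(3) by (auto simp: admissible_def field_simps)
    then show "gain_poly N x a > 0"
      using all G_N_pos_iff[OF assms(2,3)] assms(3) by fastforce
  qed
next
  assume box: "\<forall>x a. K * mu_min \<le> x \<and> x \<le> K * mu_max \<and> 1 \<le> a \<and> a \<le> 1 + eps_max
           \<longrightarrow> gain_poly N x a > 0"
  show "\<forall>mu1 eps. admissible mu_min mu_max eps_max mu1 eps \<longrightarrow> G_N N I0 K mu1 eps > 0"
  proof (intro allI impI)
    fix mu1 eps assume adm: "admissible mu_min mu_max eps_max mu1 eps"
    have "gain_poly N (K * mu1) (1 + eps) > 0"
    proof (cases "mu1 > 0")
      case True
      then show ?thesis using box adm assms(3) by (auto simp: admissible_def)
    next
      case False
      then have "- (K * mu1) > 0" using adm assms(3,4) by (auto simp: admissible_def mult_pos_neg)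
      then show ?thesis
        using gain_poly_neg_pos[of "- (K * mu1)" "1 + eps" N] adm assms(1)
        by (simp add: admissible_def)
    qed
    then show "G_N N I0 K mu1 eps > 0" using G_N_pos_iff[OF assms(2,3)] by blast
  qed
qed

lemma root_two_minus_one_less_iff:
  fixes x :: real
  assumes "N > 0" "x \<ge> 0"
  shows "root N 2 - 1 < x \<longleftrightarrow> 2 < (1 + x) ^ N"
proof -
  have "root N 2 - 1 < x \<longleftrightarrow> root N 2 < root N ((1 + x) ^ N)"
    using assms by (simp add: real_root_power_cancel) linarith
  also have "\<dots> \<longleftrightarrow> 2 < (1 + x) ^ N" using assms(1) by (rule real_root_less_iff)
  finally show ?thesis .
qed

theorem mainTheorem1:
  fixes N :: nat and I0 K mu_min mu_max eps_max :: real
  assumes "N \<ge> 2" and "I0 > 0" and "0 < mu_min" and "mu_min \<le> mu_max"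
    and "eps_max \<ge> 0" and "K > 0"
  shows "(odd N \<longrightarrow>
           ((\<forall>mu1 eps. admissible mu_min mu_max eps_max mu1 eps \<longrightarrow> G_N N I0 K mu1 eps > 0)
            \<longleftrightarrow> (G_N N I0 K mu_min eps_max > 0 \<and> G_N N I0 K mu_max eps_max > 0)))
       \<and> (even N \<longrightarrow>
           ((\<forall>mu1 eps. admissible mu_min mu_max eps_max mu1 eps \<longrightarrow> G_N N I0 K mu1 eps > 0)
            \<longleftrightarrow> (K > (root N 2 - 1) / mu_min
                 \<or> (K \<le> 1 / (mu_min * (1 + eps_max)) \<and> G_N N I0 K mu_min eps_max > 0))))"
proof -
  define p q A where "p = K * mu_min" and "q = K * mu_max" and "A = 1 + eps_max"
  have box: "0 < p" "p \<le> q" "A \<ge> 1"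
    using assms by (simp_all add: p_def q_def A_def)
  have ends: "G_N N I0 K mu_min eps_max > 0 \<longleftrightarrow> gain_poly N p A > 0"
    "G_N N I0 K mu_max eps_max > 0 \<longleftrightarrow> gain_poly N q A > 0"
    using G_N_pos_iff[OF assms(2,6)] by (simp_all add: p_def q_def A_def)
  have root: "K > (root N 2 - 1) / mu_min \<longleftrightarrow> (1 + p) ^ N > 2"
    using root_two_minus_one_less_iff[of N p] box(1) assms(1,3)
    by (simp add: p_def pos_divide_less_eq)
  have kink: "K \<le> 1 / (mu_min * (1 + eps_max)) \<longleftrightarrow> p * A \<le> 1"
    using assms(3,5) by (simp add: p_def A_def pos_le_divide_eq mult.assoc)
  show ?thesis
    unfolding all_admissible_G_N_pos_iff[OF assms(1,2,6,3)] ends root kink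
    using gain_poly_pos_on_box_odd[OF _ assms(1) box] gain_poly_pos_on_box_even[OF _ assms(1) box]
    by (simp add: p_def q_def A_def)
qed

end
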